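(* Let $Q\in\mathbf{R}^{n\times n}$ be orthogonal, $V\in\mathbf{R}^{m\times n}$ with $VV^T=I_m$, and suppose the pair $(Q,V)$ is observable. Then for every $\sigma\in\mathbf{C}$ with $|\sigma|<1$, the matrix $Q-(1-\sigma)QV^TV$ is Schur stable.
   Context: A real matrix $Q$ is orthogonal if $QQ^T=Q^TQ=I$. A matrix is Schur stable if all its eigenvalues have modulus $<1$. $(Q,V)$ observable means the standard observability condition (no eigenvector $w$ of $Q$ with $Vw=0$). *)

theory Defs
  imports "Jordan_Normal_Form.Jordan_Normal_Form"
begin

definition orthogonal_real_mat :: "nat \<Rightarrow> real mat \<Rightarrow> bool" where
  "orthogonal_real_mat n Q \<longleftrightarrow> Q \<in> carrier_mat n n \<and>
     Q * transpose_mat Q = 1\<^sub>m n \<and> transpose_mat Q * Q = 1\<^sub>m n"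

definition cmat :: "real mat \<Rightarrow> complex mat" where
  "cmat A = map_mat complex_of_real A"

definition schur_stable :: "complex mat \<Rightarrow> bool" where
  "schur_stable A \<longleftrightarrow> (\<forall>k. eigenvalue A k \<longrightarrow> cmod k < 1)"

definition observable :: "real mat \<Rightarrow> real mat \<Rightarrow> bool" where
  "observable Q V \<longleftrightarrow>
     \<not> (\<exists>w k. eigenvector (cmat Q) w k \<and> cmat V *\<^sub>v w = 0\<^sub>v (dim_row V))"

end

theory Submission
  imports Defs
begin

(* Since V V^T = I, the matrix P = V^T V is the orthogonal projection onto the
   row space of V, and M = Q (I - (1 - s) P).  Let M x = k x with x nonzero and
   split x = u + w with u = P x, w = x - P x; then u and w are orthogonal and
   V w = 0.  As M x = Q (s u + w) and the orthogonal Q preserves length,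
     |k|^2 (|u|^2 + |w|^2) = |k x|^2 = |s u + w|^2 = |s|^2 |u|^2 + |w|^2.
   If |k| >= 1 while |s| < 1, this forces u = 0, so x = w is an eigenvector of
   Q with V x = 0, which observability of (Q, V) excludes. *)

definition sqnorm :: "complex vec \<Rightarrow> real" where
  "sqnorm x = Re (x \<bullet>c x)"

lemma cinner_self_eq_sqnorm: "x \<bullet>c x = complex_of_real (sqnorm x)"
  using conjugate_square_ge_0_vec[of x]
  unfolding sqnorm_def by (simp add: less_eq_complex_def complex_eq_iff)

lemma sqnorm_nonneg: "sqnorm x \<ge> 0"
  using conjugate_square_ge_0_vec[of x] unfolding sqnorm_def by (simp add: less_eq_complex_def)

lemma sqnorm_eq_0_iff: "x \<in> carrier_vec n \<Longrightarrow> sqnorm x = 0 \<longleftrightarrow> x = 0\<^sub>v n"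
  by (metis cinner_self_eq_sqnorm conjugate_square_eq_0_vec of_real_eq_0_iff)

lemma cinner_swap: "u \<in> carrier_vec n \<Longrightarrow> w \<in> carrier_vec n \<Longrightarrow> w \<bullet>c u = cnj (u \<bullet>c w)"
  unfolding scalar_prod_def by (simp add: sum_conjugate mult.commute)

lemma sqnorm_orthogonal_sum:
  assumes u: "u \<in> carrier_vec n" and w: "w \<in> carrier_vec n" and orth: "u \<bullet>c w = 0"
  shows "sqnorm (a \<cdot>\<^sub>v u + w) = (cmod a)\<^sup>2 * sqnorm u + sqnorm w"
proof -
  have "w \<bullet>c u = 0" using cinner_swap[OF u w] orth by simp
  then have "(a \<cdot>\<^sub>v u + w) \<bullet>c (a \<cdot>\<^sub>v u + w) = a * cnj a * (u \<bullet>c u) + w \<bullet>c w"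
    using u w orth
    by (simp add: conjugate_add_vec[of _ n] conjugate_smult_vec add_scalar_prod_distrib[of _ n]
        scalar_prod_add_distrib[of _ n] algebra_simps)
  also have "a * cnj a = complex_of_real ((cmod a)\<^sup>2)"
    by (simp add: complex_norm_square del: of_real_power)
  finally show ?thesis
    unfolding cinner_self_eq_sqnorm of_real_mult[symmetric] of_real_add[symmetric] of_real_eq_iff .
qed

lemma cmat_carrier [simp]: "A \<in> carrier_mat k n \<Longrightarrow> cmat A \<in> carrier_mat k n"
  unfolding cmat_def by simp

lemma cmat_mult: "A \<in> carrier_mat k l \<Longrightarrow> B \<in> carrier_mat l n \<Longrightarrow> cmat (A * B) = cmat A * cmat B"
  unfolding cmat_def by (rule of_real_hom.mat_hom_mult)

lemma cmat_one: "cmat (1\<^sub>m n) = 1\<^sub>m n"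
  unfolding cmat_def by (intro eq_matI) auto

lemma cmat_transpose: "transpose_mat (cmat A) = cmat (transpose_mat A)"
  unfolding cmat_def by (simp add: map_mat_transpose)

lemma cmat_adjoint:
  assumes A: "A \<in> carrier_mat k n" and x: "x \<in> carrier_vec n" and y: "y \<in> carrier_vec k"
  shows "(cmat A *\<^sub>v x) \<bullet>c y = x \<bullet>c (transpose_mat (cmat A) *\<^sub>v y)"
proof -
  have "(cmat A *\<^sub>v x) \<bullet>c y = (\<Sum>i<k. \<Sum>j<n. of_real (A $$ (i, j)) * x $ j * cnj (y $ i))"
    using A x y unfolding cmat_def
    by (simp add: mult_mat_vec_def scalar_prod_def sum_distrib_right atLeast0LessThan)
  also have "\<dots> = (\<Sum>j<n. \<Sum>i<k. of_real (A $$ (i, j)) * x $ j * cnj (y $ i))"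
    by (rule sum.swap)
  also have "\<dots> = x \<bullet>c (transpose_mat (cmat A) *\<^sub>v y)"
    using A x y unfolding cmat_def
    by (simp add: mult_mat_vec_def scalar_prod_def sum_distrib_left atLeast0LessThan ac_simps)
  finally show ?thesis .
qed

lemma cmat_isometry:
  assumes A: "A \<in> carrier_mat k n" and AtA: "transpose_mat A * A = 1\<^sub>m n" and x: "x \<in> carrier_vec n"
  shows "sqnorm (cmat A *\<^sub>v x) = sqnorm x"
proof -
  have "transpose_mat (cmat A) * cmat A = 1\<^sub>m n"
    using A AtA by (simp add: cmat_transpose cmat_one flip: cmat_mult[of _ n k])
  then have "transpose_mat (cmat A) *\<^sub>v (cmat A *\<^sub>v x) = x"
    using A x by (simp flip: assoc_mult_mat_vec[of _ n k _ n])
  moreover have "cmat A *\<^sub>v x \<in> carrier_vec k"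
    using cmat_carrier[OF A] x by (rule mult_mat_vec_carrier)
  ultimately show ?thesis
    using cmat_adjoint[OF A x, of "cmat A *\<^sub>v x"] unfolding sqnorm_def by simp
qed

(* If V V^T = I then u = V^T V x is the orthogonal projection of x onto the row
   space of V: the remainder x - u lies in the kernel of V and is orthogonal to u. *)
lemma coisometry_projection_split:
  assumes V: "V \<in> carrier_mat m n" and VVt: "V * transpose_mat V = 1\<^sub>m m" and x: "x \<in> carrier_vec n"
  defines "u \<equiv> transpose_mat (cmat V) *\<^sub>v (cmat V *\<^sub>v x)"
  shows "cmat V *\<^sub>v (x - u) = 0\<^sub>v m" and "u \<bullet>c (x - u) = 0"
proof -
  let ?y = "cmat V *\<^sub>v x"
  have cV: "cmat V \<in> carrier_mat m n" and cVt: "transpose_mat (cmat V) \<in> carrier_mat n m"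
    using V by auto
  have y: "?y \<in> carrier_vec m" and u: "u \<in> carrier_vec n"
    using cV cVt x unfolding u_def by auto
  have "cmat V * transpose_mat (cmat V) = 1\<^sub>m m"
    using V VVt by (simp add: cmat_transpose cmat_one flip: cmat_mult[of _ m n])
  then have "cmat V *\<^sub>v u = ?y"
    using cV cVt y unfolding u_def by (simp flip: assoc_mult_mat_vec[of _ m n _ m])
  then show Vw: "cmat V *\<^sub>v (x - u) = 0\<^sub>v m"
    using cV x u by (simp add: mult_minus_distrib_mat_vec)
  have "u \<bullet>c (x - u) = ?y \<bullet>c (cmat V *\<^sub>v (x - u))"
    using cmat_adjoint[of "transpose_mat V" n m, OF _ y, of "x - u"] V x u
    unfolding u_def by (simp add: cmat_transpose)
  then show "u \<bullet>c (x - u) = 0"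
    unfolding Vw using y by simp
qed

lemma dominated_quadratic_form_vanishes:
  fixes a b \<sigma> \<kappa> :: real
  assumes "0 \<le> a" "0 \<le> b" "\<sigma> < 1" "1 \<le> \<kappa>" "\<kappa> * (a + b) = \<sigma> * a + b"
  shows "a = 0"
proof -
  have "(\<kappa> - \<sigma>) * a + (\<kappa> - 1) * b = 0"
    using assms(5) by (simp add: algebra_simps)
  moreover have "0 \<le> (\<kappa> - \<sigma>) * a" "0 \<le> (\<kappa> - 1) * b"
    using assms(1-4) by simp_all
  ultimately have "(\<kappa> - \<sigma>) * a = 0"
    by linarith
  then show ?thesis
    using assms(3,4) by simp
qed

lemma smult_mat_mult_vec:
  fixes A :: "'a :: comm_semiring_0 mat"
  shows "A \<in> carrier_mat k n \<Longrightarrow> v \<in> carrier_vec n \<Longrightarrow> (c \<cdot>\<^sub>m A) *\<^sub>v v = c \<cdot>\<^sub>v (A *\<^sub>v v)"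
  by (intro eq_vecI) (auto simp: scalar_prod_def sum_distrib_left ac_simps)

lemma damped_feedback_apply:
  assumes Q: "Q \<in> carrier_mat n n" and V: "V \<in> carrier_mat m n" and x: "x \<in> carrier_vec n"
  defines "u \<equiv> transpose_mat (cmat V) *\<^sub>v (cmat V *\<^sub>v x)"
  shows "(cmat Q - c \<cdot>\<^sub>m (cmat Q * transpose_mat (cmat V) * cmat V)) *\<^sub>v x = cmat Q *\<^sub>v (x - c \<cdot>\<^sub>v u)"
proof -
  have cQ: "cmat Q \<in> carrier_mat n n" and cV: "cmat V \<in> carrier_mat m n"
    and cVt: "transpose_mat (cmat V) \<in> carrier_mat n m"
    using Q V by auto
  have u: "u \<in> carrier_vec n"
    using cV cVt x unfolding u_def by auto
  let ?P = "cmat Q * transpose_mat (cmat V) * cmat V"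
  have P: "?P \<in> carrier_mat n n"
    using cQ cV cVt by auto
  have Px: "?P *\<^sub>v x = cmat Q *\<^sub>v u"
    unfolding u_def assoc_mult_mat_vec[OF mult_carrier_mat[OF cQ cVt] cV x]
    by (rule assoc_mult_mat_vec[OF cQ cVt mult_mat_vec_carrier[OF cV x]])
  have "(cmat Q - c \<cdot>\<^sub>m ?P) *\<^sub>v x = cmat Q *\<^sub>v x - (c \<cdot>\<^sub>m ?P) *\<^sub>v x"
    using cQ P x by (intro minus_mult_distrib_mat_vec) auto
  also have "\<dots> = cmat Q *\<^sub>v x - c \<cdot>\<^sub>v (cmat Q *\<^sub>v u)"
    unfolding smult_mat_mult_vec[OF P x] Px ..
  also have "\<dots> = cmat Q *\<^sub>v (x - c \<cdot>\<^sub>v u)"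
    using cQ x u by (simp add: mult_minus_distrib_mat_vec mult_mat_vec)
  finally show ?thesis .
qed

lemma large_eigenvalue_gives_unobservable_mode:
  assumes Q: "Q \<in> carrier_mat n n" and QtQ: "transpose_mat Q * Q = 1\<^sub>m n"
    and V: "V \<in> carrier_mat m n" and VVt: "V * transpose_mat V = 1\<^sub>m m"
    and s: "cmod s < 1" and k: "1 \<le> cmod k"
    and eig: "eigenvector (cmat Q - (1 - s) \<cdot>\<^sub>m (cmat Q * transpose_mat (cmat V) * cmat V)) x k"
  shows "eigenvector (cmat Q) x k \<and> cmat V *\<^sub>v x = 0\<^sub>v m"
proof -
  have x: "x \<in> carrier_vec n" and x0: "x \<noteq> 0\<^sub>v n"
    and Mx: "(cmat Q - (1 - s) \<cdot>\<^sub>m (cmat Q * transpose_mat (cmat V) * cmat V)) *\<^sub>v x = k \<cdot>\<^sub>v x"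
    using eig Q unfolding eigenvector_def by (auto simp: cmat_def)
  define u where "u = transpose_mat (cmat V) *\<^sub>v (cmat V *\<^sub>v x)"
  define w where "w = x - u"
  have u: "u \<in> carrier_vec n" and w: "w \<in> carrier_vec n"
    using cmat_carrier[OF V] x unfolding u_def w_def by auto
  have Vw: "cmat V *\<^sub>v w = 0\<^sub>v m" and orth: "u \<bullet>c w = 0"
    using coisometry_projection_split[OF V VVt x] unfolding u_def w_def by auto
  have x_split: "x = 1 \<cdot>\<^sub>v u + w" and z_split: "x - (1 - s) \<cdot>\<^sub>v u = s \<cdot>\<^sub>v u + w"
    using u x unfolding w_def by (auto simp: algebra_simps)
  have Qz: "cmat Q *\<^sub>v (s \<cdot>\<^sub>v u + w) = k \<cdot>\<^sub>v x"
    using Mx damped_feedback_apply[OF Q V x, of "1 - s", folded u_def] z_split by simp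
  (* Compare the lengths of both sides of the eigen-equation. *)
  have "(cmod k)\<^sup>2 * (sqnorm u + sqnorm w) = (cmod k)\<^sup>2 * sqnorm x"
    using sqnorm_orthogonal_sum[OF u w orth, of 1] x_split by simp
  also have "\<dots> = sqnorm (k \<cdot>\<^sub>v x)"
    using sqnorm_orthogonal_sum[OF x zero_carrier_vec, of k] sqnorm_eq_0_iff[OF zero_carrier_vec] x
    by simp
  also have "\<dots> = sqnorm (s \<cdot>\<^sub>v u + w)"
    using cmat_isometry[OF Q QtQ, of "s \<cdot>\<^sub>v u + w"] u w Qz by simp
  also have "\<dots> = (cmod s)\<^sup>2 * sqnorm u + sqnorm w"
    by (rule sqnorm_orthogonal_sum[OF u w orth])
  finally have balance: "(cmod k)\<^sup>2 * (sqnorm u + sqnorm w) = (cmod s)\<^sup>2 * sqnorm u + sqnorm w" .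
  have "(cmod s)\<^sup>2 < 1" and "1 \<le> (cmod k)\<^sup>2"
    using s k by (simp_all add: abs_square_less_1 one_le_power)
  then have "sqnorm u = 0"
    using dominated_quadratic_form_vanishes[OF sqnorm_nonneg sqnorm_nonneg _ _ balance] by simp
  then have u0: "u = 0\<^sub>v n"
    using sqnorm_eq_0_iff[OF u] by simp
  then have "w = x" and "s \<cdot>\<^sub>v u + w = x"
    using x unfolding w_def by auto
  then show ?thesis
    using Qz Vw x x0 cmat_carrier[OF Q] by (simp add: eigenvector_def)
qed

theorem proposition1:
  fixes Q V :: "real mat" and n m :: nat and s :: complex
  assumes "orthogonal_real_mat n Q"
    and "V \<in> carrier_mat m n"
    and "V * transpose_mat V = 1\<^sub>m m"
    and "observable Q V"
    and "cmod s < 1"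
  shows "schur_stable (cmat Q - (1 - s) \<cdot>\<^sub>m (cmat Q * transpose_mat (cmat V) * cmat V))"
  unfolding schur_stable_def
proof (intro allI impI)
  fix k
  assume "eigenvalue (cmat Q - (1 - s) \<cdot>\<^sub>m (cmat Q * transpose_mat (cmat V) * cmat V)) k"
  then obtain x where eig: "eigenvector (cmat Q - (1 - s) \<cdot>\<^sub>m (cmat Q * transpose_mat (cmat V) * cmat V)) x k"
    unfolding eigenvalue_def by blast
  have Q: "Q \<in> carrier_mat n n" and QtQ: "transpose_mat Q * Q = 1\<^sub>m n"
    using assms(1) unfolding orthogonal_real_mat_def by auto
  show "cmod k < 1"
  proof (rule ccontr)
    assume "\<not> cmod k < 1"
    then have "eigenvector (cmat Q) x k \<and> cmat V *\<^sub>v x = 0\<^sub>v m"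
      using large_eigenvalue_gives_unobservable_mode[OF Q QtQ assms(2,3,5) _ eig] by simp
    then show False
      using assms(2,4) unfolding observable_def by auto
  qed
qed

end
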